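(* Let $\epsilon>0$ and $\delta\in(0,1)$, and let $M=\max_{c\in C}\max_{v\in V} f_c(v\mid\emptyset)>0$. If $\mathrm{OPT}\ge\frac{4}{\epsilon^2}M\log(2k)$, then Algorithm 2 with failure parameter $\delta$ outputs a set $S$ with $|S|\le B$ such that \[ \min_{c\in C} f_c(S)\;\ge\;\left(1-\frac1e-\epsilon\right)\mathrm{OPT} \] with probability at least $1-\delta$.
   Context: Setup: $V$ is a finite nonempty ground set, $C$ is a finite nonempty set of "colors", $k=|C|$. For each $c\in C$, $f_c\colon 2^V\to\mathbb{R}_{\ge 0}$ is monotone and submodular. $B$ is a positive integer (the budget). $f(T\mid S)=f(S\cup T)-f(S)$ and $f(v\mid S)=f(\{v\}\mid S)$. $\mathrm{OPT}=\max_{S\subseteq V,\,|S|\le B}\min_{c\in C} f_c(S)$. $\Delta_V$ is the probability simplex over $V$; $\log$ is the natural logarithm unless indicated. $\mathrm{LP}(S)$ is the linear program in variables $\xi\in\mathbb{R}$, $x\in\mathbb{R}^V$: maximize $\xi$ subject to $\sum_{v\in V} x_v\,(B f_c(v\mid S)+f_c(S))\ge \xi$ for all $c\in C$, $\sum_{v\in V}x_v=1$, $x_v\ge 0$ for all $v\in V$. Algorithm 2 (input: the $f_c$, $B$, $\delta$): set $S_{\mathrm{best}}=\emptyset$. Repeat, with independent randomness, $\lceil\log_2(2/\delta)\rceil$ times: set $S^{(0)}=\emptyset$; for $i=1,\dots,B$: let $x^{(i)}\in\Delta_V$ be (the $x$-part of) an optimal solution of $\mathrm{LP}(S^{(i-1)})$,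 sample $v^{(i)}\sim x^{(i)}$, set $S^{(i)}=S^{(i-1)}\cup\{v^{(i)}\}$; then if $\min_{c}f_c(S^{(B)})\ge\min_c f_c(S_{\mathrm{best}})$ set $S_{\mathrm{best}}=S^{(B)}$. Output $S_{\mathrm{best}}$. *)

theory Defs
  imports "HOL-Probability.Probability"
begin

definition monotone_on_sets :: "'v set \<Rightarrow> ('v set \<Rightarrow> real) \<Rightarrow> bool" where
  "monotone_on_sets V g \<longleftrightarrow> (\<forall>S T. S \<subseteq> T \<and> T \<subseteq> V \<longrightarrow> g S \<le> g T)"

definition submodular_on :: "'v set \<Rightarrow> ('v set \<Rightarrow> real) \<Rightarrow> bool" where
  "submodular_on V g \<longleftrightarrow>
     (\<forall>S T. S \<subseteq> V \<and> T \<subseteq> V \<longrightarrow> g (S \<union> T) + g (S \<inter> T) \<le> g S + g T)"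

definition marg :: "('v set \<Rightarrow> real) \<Rightarrow> 'v \<Rightarrow> 'v set \<Rightarrow> real" where
  "marg g v S = g (S \<union> {v}) - g S"

definition minval :: "'c set \<Rightarrow> ('c \<Rightarrow> 'v set \<Rightarrow> real) \<Rightarrow> 'v set \<Rightarrow> real" where
  "minval C f S = Min ((\<lambda>c. f c S) ` C)"

definition OPT :: "'v set \<Rightarrow> 'c set \<Rightarrow> ('c \<Rightarrow> 'v set \<Rightarrow> real) \<Rightarrow> nat \<Rightarrow> real" where
  "OPT V C f B = Max {minval C f S | S. S \<subseteq> V \<and> card S \<le> B}"

text \<open>Objective of LP(S) at a point x of the simplex (the optimal xi for fixed x):
  min over colors of sum_v x_v (B f_c(v|S) + f_c(S)).  Points of the simplex over V
  are represented as pmfs supported in V.\<close>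
definition lp_obj :: "'v set \<Rightarrow> 'c set \<Rightarrow> ('c \<Rightarrow> 'v set \<Rightarrow> real) \<Rightarrow> nat \<Rightarrow> 'v set \<Rightarrow> 'v pmf \<Rightarrow> real" where
  "lp_obj V C f B S x =
     Min ((\<lambda>c. \<Sum>v\<in>V. pmf x v * (real B * marg (f c) v S + f c S)) ` C)"

definition lp_optimal :: "'v set \<Rightarrow> 'c set \<Rightarrow> ('c \<Rightarrow> 'v set \<Rightarrow> real) \<Rightarrow> nat \<Rightarrow> 'v set \<Rightarrow> 'v pmf \<Rightarrow> bool" where
  "lp_optimal V C f B S x \<longleftrightarrow> set_pmf x \<subseteq> V \<and>
     (\<forall>y. set_pmf y \<subseteq> V \<longrightarrow> lp_obj V C f B S y \<le> lp_obj V C f B S x)"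

text \<open>One run of the inner loop (i steps), given a rule sel choosing an optimal LP solution.\<close>
primrec greedy_run :: "('v set \<Rightarrow> 'v pmf) \<Rightarrow> nat \<Rightarrow> 'v set pmf" where
  "greedy_run sel 0 = return_pmf {}"
| "greedy_run sel (Suc i) = bind_pmf (greedy_run sel i) (\<lambda>S. map_pmf (\<lambda>v. S \<union> {v}) (sel S))"

primrec alg_rep :: "'c set \<Rightarrow> ('c \<Rightarrow> 'v set \<Rightarrow> real) \<Rightarrow> nat \<Rightarrow> ('v set \<Rightarrow> 'v pmf) \<Rightarrow> nat \<Rightarrow> 'v set pmf" where
  "alg_rep C f B sel 0 = return_pmf {}"
| "alg_rep C f B sel (Suc r) = bind_pmf (alg_rep C f B sel r) (\<lambda>Sbest.
      map_pmf (\<lambda>S. if minval C f S \<ge> minval C f Sbest then S else Sbest) (greedy_run sel B))"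

definition algorithm2 :: "'c set \<Rightarrow> ('c \<Rightarrow> 'v set \<Rightarrow> real) \<Rightarrow> nat \<Rightarrow> ('v set \<Rightarrow> 'v pmf) \<Rightarrow> real \<Rightarrow> 'v set pmf" where
  "algorithm2 C f B sel \<delta> = alg_rep C f B sel (nat \<lceil>log 2 (2 / \<delta>)\<rceil>)"

end

theory Submission imports Defs begin

text \<open>
  Fix a colour \<open>c\<close> and call \<open>g(S) = OPT - f\<^sub>c(S)\<close> the gap of the current set. Feeding the
  uniform distribution on an optimal set into \<open>LP(S)\<close> shows that the sampled element has
  expected marginal gain at least \<open>g(S)/B\<close>. Since marginal gains lie in \<open>[0, M]\<close>, convexity of
  \<open>exp\<close> turns this into a bound on the moment generating function,
  \<open>E exp(y g(S \<union> {v})) \<le> exp(h(y) g(S))\<close> with \<open>h(y) = y - (1 - exp(-yM))/(MB)\<close>. After \<open>B\<close> steps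
  starting from \<open>y = \<epsilon>/M\<close>, \<open>h\<close> has shrunk \<open>y\<close> by the factor \<open>exp(-1/(1+\<epsilon>))\<close>, and Markov's inequality
  together with the hypothesis on \<open>OPT\<close> bounds the probability that colour \<open>c\<close> ends below
  \<open>(1 - 1/e - \<epsilon>) OPT\<close> by \<open>1/(2k)\<close>. A union bound over the colours makes a single run fail
  with probability at most \<open>1/2\<close>, and the independent repetitions push this below \<open>\<delta>\<close>.
\<close>

section \<open>Monotone submodular set functions\<close>

lemma marg_nonneg:
  assumes "monotone_on_sets V g" "S \<subseteq> V" "v \<in> V"
  shows "0 \<le> marg g v S"
proof -
  have "g S \<le> g (S \<union> {v})"
    using assms unfolding monotone_on_sets_def by (meson Un_subset_iff empty_subsetI insert_subset sup_ge1)
  then show ?thesis unfolding marg_def by simp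
qed

lemma marg_antimono:
  assumes mono: "monotone_on_sets V g" and submod: "submodular_on V g"
    and "S \<subseteq> T" "T \<subseteq> V" "v \<in> V"
  shows "marg g v T \<le> marg g v S"
proof (cases "v \<in> T")
  case True
  then have "marg g v T = 0" unfolding marg_def by (simp add: insert_absorb)
  moreover have "0 \<le> marg g v S" using marg_nonneg[OF mono] assms by blast
  ultimately show ?thesis by simp
next
  case False
  have "S \<union> {v} \<subseteq> V" using assms by blast
  then have "g ((S \<union> {v}) \<union> T) + g ((S \<union> {v}) \<inter> T) \<le> g (S \<union> {v}) + g T"
    using submod \<open>T \<subseteq> V\<close> unfolding submodular_on_def by blast
  moreover have "(S \<union> {v}) \<union> T = T \<union> {v}" "(S \<union> {v}) \<inter> T = S" using False assms by auto
  ultimately show ?thesis unfolding marg_def by simp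
qed

lemma submodular_le_sum_marg:
  assumes "monotone_on_sets V g" "submodular_on V g" "S \<subseteq> V" "T \<subseteq> V" "finite T"
  shows "g (S \<union> T) - g S \<le> (\<Sum>v\<in>T. marg g v S)"
  using \<open>finite T\<close> \<open>T \<subseteq> V\<close>
proof (induction T rule: finite_induct)
  case empty
  then show ?case by simp
next
  case (insert v T)
  have "g (S \<union> insert v T) - g (S \<union> T) = marg g v (S \<union> T)"
    unfolding marg_def by (simp add: Un_insert_right)
  also have "\<dots> \<le> marg g v S"
    using insert.prems assms by (intro marg_antimono) auto
  finally show ?case using insert by simp
qed

section \<open>Analytic inequalities\<close>

lemma exp_le_chord:
  fixes m M y :: real
  assumes "0 \<le> m" "m \<le> M" "0 < M" "0 \<le> y"
  shows "exp (- y * m) \<le> 1 - m / M * (1 - exp (- y * M))"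
proof -
  define t where "t = m / M"
  have t: "0 \<le> t" "t \<le> 1" using assms by (auto simp: t_def)
  have "convex_on UNIV (\<lambda>x. exp (y * x))" by (rule convex_on_exp) (use assms in auto)
  from convex_onD[OF this, of t 0 "- M"] t
  have "exp (y * ((1 - t) *\<^sub>R 0 + t *\<^sub>R (- M))) \<le> (1 - t) * exp (y * 0) + t * exp (y * (- M))"
    by simp
  moreover have "(1 - t) *\<^sub>R 0 + t *\<^sub>R (- M) = - m" using assms by (simp add: t_def)
  ultimately show ?thesis by (simp add: t_def algebra_simps)
qed

lemma exp_neg_recip_one_plus_diff_le:
  fixes \<epsilon> :: real
  assumes "0 \<le> \<epsilon>"
  shows "exp (- 1 / (1 + \<epsilon>)) - exp (- 1) \<le> 3 / 4 * \<epsilon>"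
proof -
  define s where "s = \<epsilon> / (1 + \<epsilon>)"
  have s: "0 \<le> s" "s \<le> 1" "s \<le> \<epsilon>" using assms by (auto simp: s_def field_simps)
  have "- 1 / (1 + \<epsilon>) = - 1 * (1 - s)" using assms by (simp add: s_def field_simps)
  then have "exp (- 1 / (1 + \<epsilon>)) \<le> 1 - (1 - s) * (1 - exp (- 1))"
    using exp_le_chord[of "1 - s" 1 1] s by simp
  moreover have "exp (- 1 :: real) \<ge> 1 / 4"
    using exp_le by (simp add: exp_minus field_simps)
  then have "s * (1 - exp (- 1)) \<le> s * (3 / 4)" using s by (intro mult_left_mono) auto
  ultimately show ?thesis using s by (simp add: algebra_simps)
qed

lemma half_power_le_of_ceiling_log:
  assumes "0 < \<delta>"
  shows "(1 / 2 :: real) ^ nat \<lceil>log 2 (2 / \<delta>)\<rceil> \<le> \<delta>"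
proof -
  define r where "r = nat \<lceil>log 2 (2 / \<delta>)\<rceil>"
  have "log 2 (2 / \<delta>) \<le> real r" unfolding r_def by linarith
  then have "2 / \<delta> \<le> 2 ^ r"
    using assms by (simp add: log_le_iff powr_realpow)
  then have "1 / \<delta> \<le> 2 ^ r" using assms by (simp add: divide_le_eq)
  then show ?thesis using assms by (simp add: r_def power_one_over field_simps)
qed

section \<open>Moment generating functions of the gap\<close>

definition mgf_step :: "real \<Rightarrow> nat \<Rightarrow> real \<Rightarrow> real" where
  "mgf_step M B y = y - (1 - exp (- y * M)) / (M * real B)"

lemma mgf_step_nonneg:
  assumes "0 < M" "0 < B" "0 \<le> y"
  shows "0 \<le> mgf_step M B y"
proof -
  have "(1 - exp (- y * M)) / (M * real B) \<le> y * M / (M * real B)"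
    using exp_ge_add_one_self[of "- y * M"] assms by (intro divide_right_mono) auto
  also have "\<dots> = y / real B" using assms by simp
  also have "\<dots> \<le> y" using assms by (simp add: divide_le_eq mult_le_cancel_left1)
  finally show ?thesis unfolding mgf_step_def by simp
qed

lemma mgf_step_le:
  assumes "0 < M" "0 < B" "0 < \<epsilon>" "0 \<le> y" "y \<le> \<epsilon> / M"
  shows "mgf_step M B y \<le> (1 - 1 / (real B * (1 + \<epsilon>))) * y"
proof -
  have yM: "0 \<le> y * M" "y * M \<le> \<epsilon>" using assms by (auto simp: le_divide_eq)
  have "exp (- y * M) \<le> 1 / (1 + y * M)"
    using exp_ge_add_one_self[of "y * M"] yM by (simp add: exp_minus field_simps)
  then have "y * M / (1 + y * M) \<le> 1 - exp (- y * M)"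
    using yM by (simp add: field_simps)
  moreover have "y * M / (1 + \<epsilon>) \<le> y * M / (1 + y * M)"
    using yM by (intro divide_left_mono) auto
  ultimately have "y * M / (1 + \<epsilon>) \<le> 1 - exp (- y * M)" by linarith
  then have "y * M / (1 + \<epsilon>) / (M * real B) \<le> (1 - exp (- y * M)) / (M * real B)"
    using assms by (intro divide_right_mono) auto
  moreover have "y * M / (1 + \<epsilon>) / (M * real B) = (M * y) / (M * (real B * (1 + \<epsilon>)))"
    by (simp add: divide_divide_eq_left ac_simps)
  moreover have "\<dots> = y / (real B * (1 + \<epsilon>))" using assms by simp
  ultimately show ?thesis unfolding mgf_step_def by (simp add: algebra_simps)
qed

lemma mgf_step_funpow_le:
  assumes "0 < M" "0 < B" "0 < \<epsilon>"
  shows "0 \<le> (mgf_step M B ^^ j) (\<epsilon> / M)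
    \<and> (mgf_step M B ^^ j) (\<epsilon> / M) \<le> \<epsilon> / M * exp (- real j / (real B * (1 + \<epsilon>)))"
proof (induction j)
  case 0
  then show ?case using assms by simp
next
  case (Suc j)
  define y where "y = (mgf_step M B ^^ j) (\<epsilon> / M)"
  define d where "d = 1 / (real B * (1 + \<epsilon>))"
  have y: "0 \<le> y" "y \<le> \<epsilon> / M * exp (- real j * d)" using Suc.IH by (simp_all add: y_def d_def)
  have "exp (- real j * d) \<le> 1" using assms by (simp add: d_def)
  then have "y \<le> \<epsilon> / M" using y mult_left_le[of _ "\<epsilon> / M"] assms by fastforce
  then have "mgf_step M B y \<le> (1 - d) * y" using mgf_step_le assms y by (simp add: d_def)
  also have "\<dots> \<le> exp (- d) * y" using exp_ge_add_one_self[of "- d"] y by (intro mult_right_mono) auto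
  also have "\<dots> \<le> exp (- d) * (\<epsilon> / M * exp (- real j * d))" using y by (intro mult_left_mono) auto
  also have "\<dots> = \<epsilon> / M * exp (- real (Suc j) * d)" by (simp add: exp_add[symmetric] algebra_simps)
  finally show ?case using mgf_step_nonneg[OF assms(1,2) y(1)] by (simp add: y_def d_def)
qed

lemma mgf_step_funpow_exponent_le:
  assumes "0 < M" "0 < B" "0 < \<epsilon>" "0 \<le> x"
  shows "(mgf_step M B ^^ B) (\<epsilon> / M) * x - \<epsilon> / M * ((exp (- 1) + \<epsilon>) * x) \<le> - (\<epsilon>\<^sup>2 * x / (4 * M))"
proof -
  have "real B / (real B * (1 + \<epsilon>)) = 1 / (1 + \<epsilon>)" using assms by simp
  then have shrunk: "(mgf_step M B ^^ B) (\<epsilon> / M) \<le> \<epsilon> / M * exp (- 1 / (1 + \<epsilon>))"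
    using conjunct2[OF mgf_step_funpow_le[OF assms(1-3), of B]] by simp
  have "(mgf_step M B ^^ B) (\<epsilon> / M) * x - \<epsilon> / M * ((exp (- 1) + \<epsilon>) * x)
      \<le> \<epsilon> / M * exp (- 1 / (1 + \<epsilon>)) * x - \<epsilon> / M * ((exp (- 1) + \<epsilon>) * x)"
    using mult_right_mono[OF shrunk assms(4)] by linarith
  also have "\<dots> = \<epsilon> / M * x * (exp (- 1 / (1 + \<epsilon>)) - exp (- 1) - \<epsilon>)"
    by (simp add: algebra_simps add_divide_distrib)
  also have "\<dots> \<le> \<epsilon> / M * x * (- \<epsilon> / 4)"
    using exp_neg_recip_one_plus_diff_le[of \<epsilon>] assms by (intro mult_left_mono) auto
  also have "\<dots> = - (\<epsilon>\<^sup>2 * x / (4 * M))" by (simp add: power2_eq_square ac_simps)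
  finally show ?thesis .
qed

lemma prob_le_exp_moment:
  fixes p :: "'a pmf" and X :: "'a \<Rightarrow> real"
  assumes "0 \<le> y" "0 \<le> b" "(\<integral>\<^sup>+x. ennreal (exp (y * X x)) \<partial>p) \<le> ennreal b"
  shows "measure_pmf.prob p {x. a < X x} \<le> b / exp (y * a)"
proof -
  have "(\<integral>\<^sup>+x. ennreal (exp (y * a)) * indicator {x. a < X x} x \<partial>p) \<le> (\<integral>\<^sup>+x. ennreal (exp (y * X x)) \<partial>p)"
    using assms(1) by (intro nn_integral_mono) (auto simp: indicator_def intro!: ennreal_leI mult_left_mono)
  then have "ennreal (exp (y * a) * measure_pmf.prob p {x. a < X x}) \<le> ennreal b"
    using assms(3) by (simp add: nn_integral_cmult_indicator measure_pmf.emeasure_eq_measure ennreal_mult)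
  then show ?thesis using assms(2) by (simp add: field_simps)
qed

lemma sum_pmf_affine:
  assumes "finite A" "set_pmf x \<subseteq> A"
  shows "(\<Sum>v\<in>A. pmf x v * (b * h v + a)) = b * (\<Sum>v\<in>A. pmf x v * h v) + a"
proof -
  have "(\<Sum>v\<in>A. pmf x v * (b * h v + a)) = b * (\<Sum>v\<in>A. pmf x v * h v) + (\<Sum>v\<in>A. pmf x v) * a"
    by (simp add: algebra_simps sum.distrib sum_distrib_left sum_distrib_right)
  then show ?thesis using sum_pmf_eq_1[OF assms] by simp
qed

section \<open>Repeating the randomized rounding\<close>

lemma alg_rep_failure_le:
  assumes run_card: "\<And>S. S \<in> set_pmf (greedy_run sel B) \<Longrightarrow> card S \<le> B"
    and run_fail: "measure_pmf.prob (greedy_run sel B) {S. minval C f S < \<tau>} \<le> p"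
  shows "measure_pmf.prob (alg_rep C f B sel r) {S. \<not> (card S \<le> B \<and> \<tau> \<le> minval C f S)} \<le> p ^ r"
proof -
  let ?bad = "{S. \<not> (card S \<le> B \<and> \<tau> \<le> minval C f S)}"
  let ?run = "greedy_run sel B"
  let ?keep = "\<lambda>Sb S. if minval C f S \<ge> minval C f Sb then S else Sb"
  have p: "0 \<le> p" using run_fail measure_nonneg order_trans by blast
  have rep_card: "card S \<le> B" if "S \<in> set_pmf (alg_rep C f B sel r)" for S r
    using that by (induction r arbitrary: S) (auto simp: run_card split: if_splits)
  \<comment> \<open>The best set so far is only bad if it fails the threshold, and then so must the new run.\<close>
  have step: "emeasure ?run (?keep Sb -` ?bad) \<le> ennreal p * indicator ?bad Sb" if "card Sb \<le> B" for Sb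
  proof (cases "Sb \<in> ?bad")
    case True
    have "?keep Sb -` ?bad \<inter> set_pmf ?run \<subseteq> {S. minval C f S < \<tau>}"
      using True that run_card by (auto split: if_splits)
    then have "emeasure ?run (?keep Sb -` ?bad) \<le> emeasure ?run {S. minval C f S < \<tau>}"
      by (subst emeasure_Int_set_pmf[symmetric]) (rule emeasure_mono, auto)
    also have "\<dots> \<le> ennreal p"
      using run_fail by (simp add: measure_pmf.emeasure_eq_measure ennreal_leI)
    finally show ?thesis using True by simp
  next
    case False
    then have "?keep Sb -` ?bad \<inter> set_pmf ?run = {}" using run_card by (auto split: if_splits)
    then show ?thesis using False by (simp add: emeasure_Int_set_pmf[symmetric, of ?run])
  qed
  have "emeasure (alg_rep C f B sel r) ?bad \<le> ennreal (p ^ r)"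
  proof (induction r)
    case 0
    then show ?case by (simp split: split_indicator)
  next
    case (Suc r)
    have "emeasure (alg_rep C f B sel (Suc r)) ?bad
        = (\<integral>\<^sup>+Sb. emeasure ?run (?keep Sb -` ?bad) \<partial>alg_rep C f B sel r)"
      by simp
    also have "\<dots> \<le> (\<integral>\<^sup>+Sb. ennreal p * indicator ?bad Sb \<partial>alg_rep C f B sel r)"
      using step rep_card by (intro nn_integral_mono_AE) (auto simp: AE_measure_pmf_iff)
    also have "\<dots> = ennreal p * emeasure (alg_rep C f B sel r) ?bad"
      by (simp add: nn_integral_cmult_indicator)
    also have "\<dots> \<le> ennreal p * ennreal (p ^ r)" using Suc.IH by (rule mult_left_mono) simp
    finally show ?case using p by (simp add: ennreal_mult[symmetric])
  qed
  then show ?thesis using p by (simp add: measure_pmf.emeasure_eq_measure)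
qed

section \<open>A single run of the LP-guided sampling\<close>

locale lp_sampling =
  fixes V :: "'v set" and C :: "'c set" and f :: "'c \<Rightarrow> 'v set \<Rightarrow> real"
    and M :: real and B :: nat and sel :: "'v set \<Rightarrow> 'v pmf"
  assumes finite_V: "finite V" and V_nonempty: "V \<noteq> {}"
    and finite_C: "finite C" and C_nonempty: "C \<noteq> {}"
    and nonneg: "\<And>c S. c \<in> C \<Longrightarrow> S \<subseteq> V \<Longrightarrow> 0 \<le> f c S"
    and mono: "\<And>c. c \<in> C \<Longrightarrow> monotone_on_sets V (f c)"
    and submod: "\<And>c. c \<in> C \<Longrightarrow> submodular_on V (f c)"
    and B_pos: "0 < B"
    and sel_optimal: "\<And>S. S \<subseteq> V \<Longrightarrow> lp_optimal V C f B S (sel S)"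
    and M_def: "M = Max ((\<lambda>(c, v). marg (f c) v {}) ` (C \<times> V))"
    and M_pos: "0 < M"
begin

abbreviation opt :: real where
  "opt \<equiv> OPT V C f B"

lemma f_mono: "c \<in> C \<Longrightarrow> S \<subseteq> T \<Longrightarrow> T \<subseteq> V \<Longrightarrow> f c S \<le> f c T"
  using mono unfolding monotone_on_sets_def by blast

lemma set_pmf_sel: "S \<subseteq> V \<Longrightarrow> set_pmf (sel S) \<subseteq> V"
  using sel_optimal unfolding lp_optimal_def by blast

lemma marg_le_M:
  assumes "c \<in> C" "S \<subseteq> V" "v \<in> V"
  shows "marg (f c) v S \<le> M"
proof -
  have "marg (f c) v S \<le> marg (f c) v {}"
    using assms mono submod by (intro marg_antimono) auto
  also have "\<dots> \<le> M" unfolding M_def using assms finite_C finite_V by (intro Max_ge) auto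
  finally show ?thesis .
qed

lemma minval_le: "c \<in> C \<Longrightarrow> minval C f S \<le> f c S"
  unfolding minval_def using finite_C by (intro Min_le) auto

lemma le_minval_iff: "x \<le> minval C f S \<longleftrightarrow> (\<forall>c\<in>C. x \<le> f c S)"
  unfolding minval_def using finite_C C_nonempty by (simp add: Min_ge_iff)

lemma nonempty_optimal_set:
  obtains T where "T \<subseteq> V" "T \<noteq> {}" "card T \<le> B" "opt \<le> minval C f T"
proof -
  let ?feasible = "{S. S \<subseteq> V \<and> card S \<le> B}"
  have "{minval C f S | S. S \<subseteq> V \<and> card S \<le> B} = minval C f ` ?feasible" by auto
  then have "opt = Max (minval C f ` ?feasible)" unfolding OPT_def by simp
  also have "\<dots> \<in> minval C f ` ?feasible"
  proof (rule Max_in)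
    show "finite (minval C f ` ?feasible)" using finite_V by simp
    show "minval C f ` ?feasible \<noteq> {}" by auto
  qed
  finally have "opt \<in> minval C f ` ?feasible" .
  then obtain S where "S \<in> ?feasible" "opt = minval C f S" by (rule imageE)
  then have S: "S \<subseteq> V" "card S \<le> B" "minval C f S = opt" by simp_all
  obtain v0 where v0: "v0 \<in> V" using V_nonempty by auto
  \<comment> \<open>\<open>pmf_of_set {}\<close> is junk, so an empty optimum is padded with one element.\<close>
  define T where "T = (if S = {} then {v0} else S)"
  have T: "T \<subseteq> V" "S \<subseteq> T" "T \<noteq> {}" "card T \<le> B" using S v0 B_pos by (auto simp: T_def)
  have "minval C f S \<le> f c T" if "c \<in> C" for c
    using minval_le[OF that, of S] f_mono[OF that T(2,1)] by linarith
  then have "minval C f S \<le> minval C f T" by (simp add: le_minval_iff)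
  with T S(3) show thesis using that by simp
qed

lemma lp_obj_le_sum:
  assumes "c \<in> C"
  shows "lp_obj V C f B S x \<le> (\<Sum>v\<in>V. pmf x v * (real B * marg (f c) v S + f c S))"
  unfolding lp_obj_def using assms finite_C by (intro Min_le) auto

lemma minval_le_uniform_value:
  assumes c: "c \<in> C" and S: "S \<subseteq> V" and T: "T \<subseteq> V" "T \<noteq> {}" "card T \<le> B"
  shows "minval C f T \<le> (\<Sum>v\<in>V. pmf (pmf_of_set T) v * (real B * marg (f c) v S + f c S))"
proof -
  have finT: "finite T" using T finite_V finite_subset by blast
  have gains: "0 \<le> (\<Sum>v\<in>T. marg (f c) v S)"
    using marg_nonneg[OF mono[OF c] S] T by (intro sum_nonneg) auto
  have "f c T \<le> f c (S \<union> T)" using f_mono[OF c] S T by simp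
  then have "minval C f T \<le> f c (S \<union> T)" using minval_le[OF c] by (rule order_trans[rotated])
  also have "\<dots> \<le> (\<Sum>v\<in>T. marg (f c) v S) + f c S"
    using submodular_le_sum_marg[OF mono[OF c] submod[OF c] S T(1) finT] by simp
  also have "\<dots> \<le> real B / card T * (\<Sum>v\<in>T. marg (f c) v S) + f c S"
  proof -
    have "1 \<le> real B / card T" using T finT by (simp add: card_gt_0_iff)
    from mult_right_mono[OF this gains] show ?thesis by simp
  qed
  also have "\<dots> = (\<Sum>v\<in>T. (real B * marg (f c) v S + f c S) / card T)"
    using finT T by (simp add: sum.distrib sum_divide_distrib[symmetric] sum_distrib_left[symmetric]
        field_simps card_gt_0_iff)
  also have "\<dots> = (\<Sum>v\<in>V. pmf (pmf_of_set T) v * (real B * marg (f c) v S + f c S))"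
    using finT T finite_V by (intro sum.mono_neutral_cong_left) (auto simp: indicator_def)
  finally show ?thesis .
qed

lemma lp_obj_uniform_ge:
  assumes "S \<subseteq> V" "T \<subseteq> V" "T \<noteq> {}" "card T \<le> B"
  shows "minval C f T \<le> lp_obj V C f B S (pmf_of_set T)"
  unfolding lp_obj_def using finite_C C_nonempty minval_le_uniform_value[OF _ assms]
  by (simp add: Min_ge_iff)

lemma expected_gain_ge:
  assumes S: "S \<subseteq> V" and c: "c \<in> C"
  shows "opt - f c S \<le> real B * (\<Sum>v\<in>V. pmf (sel S) v * marg (f c) v S)"
proof -
  obtain T where T: "T \<subseteq> V" "T \<noteq> {}" "card T \<le> B" "opt \<le> minval C f T"
    using nonempty_optimal_set .
  have "finite T" using T(1) finite_V finite_subset by blast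
  then have "set_pmf (pmf_of_set T) \<subseteq> V" using T by simp
  then have "lp_obj V C f B S (pmf_of_set T) \<le> lp_obj V C f B S (sel S)"
    using sel_optimal[OF S] unfolding lp_optimal_def by blast
  then have "opt \<le> lp_obj V C f B S (sel S)" using lp_obj_uniform_ge[OF S T(1-3)] T(4) by linarith
  also have "\<dots> \<le> real B * (\<Sum>v\<in>V. pmf (sel S) v * marg (f c) v S) + f c S"
    using lp_obj_le_sum[OF c] sum_pmf_affine[OF finite_V set_pmf_sel[OF S]] by metis
  finally show ?thesis by simp
qed

lemma mgf_one_step:
  assumes S: "S \<subseteq> V" and c: "c \<in> C" and y: "0 \<le> y"
  shows "(\<Sum>v\<in>V. pmf (sel S) v * exp (y * (opt - f c (S \<union> {v}))))
    \<le> exp (mgf_step M B y * (opt - f c S))"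
proof -
  define g where "g = opt - f c S"
  define rate where "rate = (1 - exp (- y * M)) / M"
  define gain where "gain = (\<Sum>v\<in>V. pmf (sel S) v * marg (f c) v S)"
  have rate: "0 \<le> rate" using M_pos y by (simp add: rate_def)
  have "exp (y * (opt - f c (S \<union> {v}))) \<le> exp (y * g) * (1 - rate * marg (f c) v S)" if v: "v \<in> V" for v
  proof -
    have "exp (- y * marg (f c) v S) \<le> 1 - rate * marg (f c) v S"
      using exp_le_chord[OF marg_nonneg[OF mono[OF c] S v] marg_le_M[OF c S v] M_pos y]
      by (simp add: rate_def mult.commute)
    moreover have "exp (y * (opt - f c (S \<union> {v}))) = exp (y * g) * exp (- y * marg (f c) v S)"
      by (simp add: g_def marg_def exp_add[symmetric] algebra_simps)
    ultimately show ?thesis by simp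
  qed
  then have "(\<Sum>v\<in>V. pmf (sel S) v * exp (y * (opt - f c (S \<union> {v}))))
      \<le> (\<Sum>v\<in>V. pmf (sel S) v * (exp (y * g) * (1 - rate * marg (f c) v S)))"
    by (intro sum_mono mult_left_mono) auto
  also have "\<dots> = exp (y * g) * (\<Sum>v\<in>V. pmf (sel S) v * (- rate * marg (f c) v S + 1))"
    by (subst sum_distrib_left) (simp add: algebra_simps)
  also have "\<dots> = exp (y * g) * (1 - rate * gain)"
    using sum_pmf_affine[OF finite_V set_pmf_sel[OF S], of "- rate" _ 1] by (simp add: gain_def)
  also have "\<dots> \<le> exp (y * g) * (1 - rate * (g / real B))"
  proof -
    have "g / real B \<le> gain"
      using expected_gain_ge[OF S c] B_pos by (simp add: g_def gain_def pos_divide_le_eq mult.commute)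
    from mult_left_mono[OF this rate] show ?thesis by (intro mult_left_mono) auto
  qed
  also have "\<dots> \<le> exp (y * g) * exp (- (rate * (g / real B)))"
    using exp_ge_add_one_self[of "- (rate * (g / real B))"] by (intro mult_left_mono) auto
  also have "\<dots> = exp (mgf_step M B y * g)"
    using M_pos B_pos by (simp add: exp_add[symmetric] mgf_step_def rate_def algebra_simps diff_divide_distrib)
  finally show ?thesis by (simp add: g_def)
qed

lemma greedy_run_support: "S \<in> set_pmf (greedy_run sel i) \<Longrightarrow> S \<subseteq> V \<and> card S \<le> i"
proof (induction i arbitrary: S)
  case 0
  then show ?case by simp
next
  case (Suc i)
  then obtain S' v where S': "S' \<in> set_pmf (greedy_run sel i)" "v \<in> set_pmf (sel S')" "S = S' \<union> {v}"
    by auto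
  with Suc.IH[OF S'(1)] set_pmf_sel have "S' \<subseteq> V" "card S' \<le> i" "v \<in> V" "finite S'"
    using finite_V finite_subset by blast+
  then show ?case using S'(3) by (auto simp: card_insert_if)
qed

lemma greedy_run_mgf:
  assumes c: "c \<in> C" and y: "0 \<le> y"
  shows "(\<integral>\<^sup>+S. ennreal (exp (y * (opt - f c S))) \<partial>greedy_run sel i)
    \<le> ennreal (exp ((mgf_step M B ^^ i) y * opt))"
  using y
proof (induction i arbitrary: y)
  case 0
  then show ?case using nonneg[OF c, of "{}"] by (simp add: mult_left_mono)
next
  case (Suc i)
  have step: "(\<integral>\<^sup>+v. ennreal (exp (y * (opt - f c (S \<union> {v})))) \<partial>sel S)
      \<le> ennreal (exp (mgf_step M B y * (opt - f c S)))" if S: "S \<subseteq> V" for S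
  proof -
    have "(\<integral>\<^sup>+v. ennreal (exp (y * (opt - f c (S \<union> {v})))) \<partial>sel S)
        = ennreal (\<Sum>v\<in>V. pmf (sel S) v * exp (y * (opt - f c (S \<union> {v}))))"
      using finite_V set_pmf_sel[OF S]
      by (subst nn_integral_measure_pmf_support[of V]) (auto simp: sum_ennreal[symmetric] ennreal_mult'' mult.commute)
    also have "\<dots> \<le> ennreal (exp (mgf_step M B y * (opt - f c S)))"
      using mgf_one_step[OF S c Suc.prems] by (rule ennreal_leI)
    finally show ?thesis .
  qed
  have "(\<integral>\<^sup>+S. ennreal (exp (y * (opt - f c S))) \<partial>greedy_run sel (Suc i))
      = (\<integral>\<^sup>+S. (\<integral>\<^sup>+v. ennreal (exp (y * (opt - f c (S \<union> {v})))) \<partial>sel S) \<partial>greedy_run sel i)"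
    by simp
  also have "\<dots> \<le> (\<integral>\<^sup>+S. ennreal (exp (mgf_step M B y * (opt - f c S))) \<partial>greedy_run sel i)"
    using step greedy_run_support by (intro nn_integral_mono_AE) (auto simp: AE_measure_pmf_iff)
  also have "\<dots> \<le> ennreal (exp ((mgf_step M B ^^ i) (mgf_step M B y) * opt))"
    using Suc.IH mgf_step_nonneg[OF M_pos B_pos Suc.prems] .
  finally show ?case by (simp only: funpow_Suc_right comp_def)
qed

lemma greedy_run_failure_le_half:
  assumes \<epsilon>: "0 < \<epsilon>" and opt_large: "4 / \<epsilon>\<^sup>2 * M * ln (2 * real (card C)) \<le> opt"
  shows "measure_pmf.prob (greedy_run sel B) {S. minval C f S < (1 - 1 / exp 1 - \<epsilon>) * opt} \<le> 1 / 2"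
proof -
  define k where "k = real (card C)"
  define \<eta> where "\<eta> = \<epsilon> / M"
  define a where "a = (exp (- 1) + \<epsilon>) * opt"
  have k: "1 \<le> k" using finite_C C_nonempty by (simp add: k_def Suc_le_eq card_gt_0_iff)
  have \<eta>: "0 < \<eta>" using \<epsilon> M_pos by (simp add: \<eta>_def)
  have "0 < 4 / \<epsilon>\<^sup>2 * M * ln (2 * k)" using \<epsilon> M_pos k by simp
  then have opt_pos: "0 < opt" using opt_large by (simp add: k_def)
  have "(mgf_step M B ^^ B) \<eta> * opt - \<eta> * a \<le> - (\<epsilon>\<^sup>2 * opt / (4 * M))"
    unfolding \<eta>_def a_def using mgf_step_funpow_exponent_le M_pos B_pos \<epsilon> opt_pos by simp
  also have "\<dots> \<le> - ln (2 * k)"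
    using opt_large \<epsilon> M_pos by (simp add: k_def field_simps)
  finally have exponent: "(mgf_step M B ^^ B) \<eta> * opt - \<eta> * a \<le> - ln (2 * k)" .
  have colour: "measure_pmf.prob (greedy_run sel B) {S. a < opt - f c S} \<le> 1 / (2 * k)" if c: "c \<in> C" for c
  proof -
    have "measure_pmf.prob (greedy_run sel B) {S. a < opt - f c S}
        \<le> exp ((mgf_step M B ^^ B) \<eta> * opt) / exp (\<eta> * a)"
      using \<eta> by (intro prob_le_exp_moment greedy_run_mgf c) auto
    also have "\<dots> \<le> exp (- ln (2 * k))" using exponent by (simp add: exp_diff[symmetric])
    also have "\<dots> = 1 / (2 * k)" using k by (simp add: exp_minus inverse_eq_divide)
    finally show ?thesis .
  qed
  have "{S. minval C f S < (1 - 1 / exp 1 - \<epsilon>) * opt} \<subseteq> (\<Union>c\<in>C. {S. a < opt - f c S})"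
  proof safe
    fix S assume "minval C f S < (1 - 1 / exp 1 - \<epsilon>) * opt"
    then obtain c where "c \<in> C" "f c S < (1 - 1 / exp 1 - \<epsilon>) * opt"
      using le_minval_iff by (meson not_le)
    then show "S \<in> (\<Union>c\<in>C. {S. a < opt - f c S})"
      by (auto simp: a_def exp_minus inverse_eq_divide algebra_simps)
  qed
  then have "measure_pmf.prob (greedy_run sel B) {S. minval C f S < (1 - 1 / exp 1 - \<epsilon>) * opt}
      \<le> measure_pmf.prob (greedy_run sel B) (\<Union>c\<in>C. {S. a < opt - f c S})"
    by (intro measure_pmf.finite_measure_mono) auto
  also have "\<dots> \<le> (\<Sum>c\<in>C. measure_pmf.prob (greedy_run sel B) {S. a < opt - f c S})"
    using finite_C by (intro measure_pmf.finite_measure_subadditive_finite) auto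
  also have "\<dots> \<le> (\<Sum>c\<in>C. 1 / (2 * k))" using colour by (intro sum_mono)
  also have "\<dots> = 1 / 2" using k by (simp add: k_def)
  finally show ?thesis .
qed

end

theorem theorem1:
  fixes V :: "'v set" and C :: "'c set" and f :: "'c \<Rightarrow> 'v set \<Rightarrow> real"
    and M :: real and B :: nat and \<epsilon> \<delta> :: real and sel :: "'v set \<Rightarrow> 'v pmf"
  assumes "finite V" "V \<noteq> {}" "finite C" "C \<noteq> {}"
    and "\<And>c S. c \<in> C \<Longrightarrow> S \<subseteq> V \<Longrightarrow> f c S \<ge> 0"
    and "\<And>c. c \<in> C \<Longrightarrow> monotone_on_sets V (f c)"
    and "\<And>c. c \<in> C \<Longrightarrow> submodular_on V (f c)"
    and "B > 0"
    and "\<epsilon> > 0" and "0 < \<delta>" and "\<delta> < 1"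
    and "\<And>S. S \<subseteq> V \<Longrightarrow> lp_optimal V C f B S (sel S)"
    and M_def: "M = Max ((\<lambda>(c, v). marg (f c) v {}) ` (C \<times> V))"
    and "M > 0"
    and "OPT V C f B \<ge> 4 / \<epsilon>\<^sup>2 * M * ln (2 * real (card C))"
  shows "measure_pmf.prob (algorithm2 C f B sel \<delta>)
           {S. card S \<le> B \<and> minval C f S \<ge> (1 - 1 / exp 1 - \<epsilon>) * OPT V C f B}
         \<ge> 1 - \<delta>"
proof -
  interpret lp_sampling V C f M B sel
    by unfold_locales (use assms in auto)
  define \<tau> where "\<tau> = (1 - 1 / exp 1 - \<epsilon>) * opt"
  let ?p = "algorithm2 C f B sel \<delta>"
  let ?bad = "{S. \<not> (card S \<le> B \<and> \<tau> \<le> minval C f S)}"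
  have "measure_pmf.prob (greedy_run sel B) {S. minval C f S < \<tau>} \<le> 1 / 2"
    unfolding \<tau>_def using assms by (intro greedy_run_failure_le_half) auto
  then have "measure_pmf.prob ?p ?bad \<le> (1 / 2) ^ nat \<lceil>log 2 (2 / \<delta>)\<rceil>"
    unfolding algorithm2_def using greedy_run_support by (intro alg_rep_failure_le) auto
  also have "\<dots> \<le> \<delta>" using half_power_le_of_ceiling_log assms by blast
  finally have "measure_pmf.prob ?p ?bad \<le> \<delta>" .
  moreover have "measure_pmf.prob ?p (UNIV - ?bad) = 1 - measure_pmf.prob ?p ?bad"
    using measure_pmf.prob_compl[of ?bad ?p] by simp
  moreover have "UNIV - ?bad = {S. card S \<le> B \<and> minval C f S \<ge> (1 - 1 / exp 1 - \<epsilon>) * opt}"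
    by (auto simp: \<tau>_def)
  ultimately show ?thesis by simp
qed

end
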